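(* Let $t \in \mathsf{Topo}$ and let $P = \{pkt_1, \dots, pkt_{|t|}\} \subseteq \mathsf{Pkt}$ be a set of $|t|$ distinct packets. For each permutation $\pi$ of $P$ there exists a well-formed PIFO tree $q_\pi \in \mathsf{PIFOTree}(t)$ such that $\mathsf{flush}(q_\pi) = \pi(pkt_{|t|}) \cdots \pi(pkt_1)$ and $\mathsf{snap}(q_\pi)$ is the list $[pkt_1, \dots, pkt_{|t|}]$ of one-letter words (i.e., the $i$-th leaf from the left holds exactly the packet $pkt_i$).
   Context: Fix a set $\mathsf{Pkt}$ of packets and a totally ordered set $\mathsf{Rk}$ of ranks (smaller is more favorable). PIFOs: for a set $S$, a PIFO over $S$ is a finite sequence of pairs $(s,r)\in S\times\mathsf{Rk}$ in insertion order; $\mathsf{PIFO}(S)$ is the set of these. $\mathsf{pop}_{\mathsf{PIFO}}(p)$ is undefined if $p$ is empty; otherwise it removes the entry of minimal rank (earliest-inserted among ties) and returns $(s,p')$. $|p|$ is the number of entries, $|p|_s$ the number with element $s$. Topologies: $\mathsf{Topo}$ is the smallest set with $*\in\mathsf{Topo}$ and $\mathsf{Node}(\vec t)\in\mathsf{Topo}$ for $n\in\mathbb{N}$, $\vec t\in\mathsf{Topo}^n$. Number of leaves: $|*|=1$, $|\mathsf{Node}(\vec t)|=\sum_i|\vec t[i]|$. PIFO trees: $\mathsf{Leaf}(p)\in\mathsf{PIFOTree}( * )$ for $p\in\mathsf{PIFO}(\mathsf{Pkt})$; $\mathsf{Internal}(\vec q,p)\in\mathsf{PIFOTree}(\mathsf{Node}(\vec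 t))$ whenever $\vec t\in\mathsf{Topo}^n$, $p\in\mathsf{PIFO}(\{1,\dots,n\})$, $\vec q[i]\in\mathsf{PIFOTree}(\vec t[i])$. $\vec q[q'/i]$ replaces the $i$-th entry by $q'$. pop (partial): $\mathsf{pop}(\mathsf{Leaf}(p))=(pkt,\mathsf{Leaf}(p'))$ if $\mathsf{pop}_{\mathsf{PIFO}}(p)=(pkt,p')$; $\mathsf{pop}(\mathsf{Internal}(\vec q,p))=(pkt,\mathsf{Internal}(\vec q[q'/i],p'))$ if $\mathsf{pop}_{\mathsf{PIFO}}(p)=(i,p')$ and $\mathsf{pop}(\vec q[i])=(pkt,q')$; undefined otherwise. Size: $|\mathsf{Leaf}(p)|=|p|$, $|\mathsf{Internal}(\vec q,p)|=\sum_i|\vec q[i]|$. Well-formedness: $\vdash\mathsf{Leaf}(p)$ always; $\vdash\mathsf{Internal}(\vec q,p)$ iff for all $i$, $\vdash\vec q[i]$ and $|p|_i=|\vec q[i]|$. Words are written by juxtaposition; $\epsilon$ is the empty word, $\cdot$ concatenation. For a PIFO $p$, $\textsc{flush}(p)$ is the word obtained by popping $p$ until empty, last popped leftmost. $\mathsf{snap}(\mathsf{Leaf}(p))=[\textsc{flush}(p)]$, $\mathsf{snap}(\mathsf{Internal}(\vec q,p))=\mathsf{snap}(\vec q[1]) +\!\!+\cdots+\!\!+\mathsf{snap}(\vec q[n])$ (list concatenation). For well-formed $q$: $\mathsf{flush}(q)=\epsilon$ if $|q|=0$, and $\mathsf{flush}(q)=\mathsf{flush}(q')\cdot pkt$ if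 $|q|>0$ and $\mathsf{pop}(q)=(pkt,q')$. *)

theory Defs
  imports Main
begin

text \<open>A PIFO over S: finite sequence of (element, rank) pairs in insertion order.
  Ranks come from a linearly ordered type 'r (smaller is more favourable).\<close>
type_synonym ('s, 'r) pifo = "('s \<times> 'r) list"

definition pifo_elems :: "('s, 'r) pifo \<Rightarrow> 's set" where
  "pifo_elems p = fst ` set p"

definition pifo_count :: "('s, 'r) pifo \<Rightarrow> 's \<Rightarrow> nat" where
  "pifo_count p s = length (filter (\<lambda>e. fst e = s) p)"

definition pop_pifo :: "('s, 'r::linorder) pifo \<Rightarrow> ('s \<times> ('s, 'r) pifo) option" where
  "pop_pifo p = (if p = [] then None else
     (let r = Min (snd ` set p);
          k = (LEAST k. k < length p \<and> snd (p ! k) = r)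
      in Some (fst (p ! k), take k p @ drop (Suc k) p)))"

lemma pop_pifo_least:
  assumes "p \<noteq> []"
  shows "(LEAST k. k < length p \<and> snd (p ! k) = Min (snd ` set p)) < length p"
proof -
  have "Min (snd ` set p) \<in> snd ` set p" using assms by (intro Min_in) auto
  then obtain x where x: "Min (snd ` set p) = snd x" "x \<in> set p" by (elim imageE) simp
  obtain k where k: "k < length p" "p ! k = x" using x(2) by (metis in_set_conv_nth)
  from k x have "k < length p \<and> snd (p ! k) = Min (snd ` set p)" by metis
  then have "(LEAST k. k < length p \<and> snd (p ! k) = Min (snd ` set p)) < length p
     \<and> snd (p ! (LEAST k. k < length p \<and> snd (p ! k) = Min (snd ` set p))) = Min (snd ` set p)"
    by (rule LeastI)
  then show ?thesis by (rule conjunct1)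
qed

lemma pop_pifo_length:
  "pop_pifo p = Some (s, p') \<Longrightarrow> length p' < length p"
  using pop_pifo_least[of p] by (auto simp: pop_pifo_def Let_def split: if_splits)

function flush_pifo :: "('s, 'r::linorder) pifo \<Rightarrow> 's list" where
  "flush_pifo p = (case pop_pifo p of None \<Rightarrow> [] | Some (s, p') \<Rightarrow> flush_pifo p' @ [s])"
  by pat_completeness auto
termination
  by (relation "measure length") (auto dest: pop_pifo_length)

declare flush_pifo.simps[simp del]

datatype topo = Star | Node "topo list"

fun leaves :: "topo \<Rightarrow> nat" where
  "leaves Star = 1"
| "leaves (Node ts) = sum_list (map leaves ts)"

text \<open>Internal nodes carry a PIFO over child indices {1..n} (1-based, as in the paper).\<close>
datatype ('p, 'r) ptree = Leaf "('p, 'r) pifo" | Internal "('p, 'r) ptree list" "(nat, 'r) pifo"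

fun has_topo :: "('p, 'r) ptree \<Rightarrow> topo \<Rightarrow> bool" where
  "has_topo (Leaf p) Star = True"
| "has_topo (Internal qs p) (Node ts) =
     (pifo_elems p \<subseteq> {1..length ts} \<and>
      list_all2 has_topo qs ts)"
| "has_topo _ _ = False"

fun tsize :: "('p, 'r) ptree \<Rightarrow> nat" where
  "tsize (Leaf p) = length p"
| "tsize (Internal qs p) = sum_list (map tsize qs)"

fun wf_tree :: "('p, 'r) ptree \<Rightarrow> bool" where
  "wf_tree (Leaf p) = True"
| "wf_tree (Internal qs p) =
     (list_all wf_tree qs \<and> (\<forall>i < length qs. pifo_count p (Suc i) = tsize (qs ! i)))"

function pop_tree :: "('p, 'r::linorder) ptree \<Rightarrow> ('p \<times> ('p, 'r) ptree) option" where
  "pop_tree (Leaf p) = (case pop_pifo p of None \<Rightarrow> None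
       | Some (pkt, p') \<Rightarrow> Some (pkt, Leaf p'))"
| "pop_tree (Internal qs p) = (case pop_pifo p of None \<Rightarrow> None
       | Some (i, p') \<Rightarrow>
           (if 1 \<le> i \<and> i \<le> length qs then
              (case pop_tree (qs ! (i - 1)) of None \<Rightarrow> None
                 | Some (pkt, q') \<Rightarrow> Some (pkt, Internal (qs[i - 1 := q']) p'))
            else None))"
  by pat_completeness auto
termination
proof (relation "measure size")
  fix qs :: "('p, 'r) ptree list" and p x xa i p' xb
  assume "1 \<le> i \<and> i \<le> length qs"
  then have "qs ! (i - 1) \<in> set qs" by auto
  then have "size (qs ! (i - 1)) \<le> size_list size qs" by (rule size_list_estimation') simp
  then show "(qs ! (i - 1), Internal qs p) \<in> measure size" by simp
qed auto

fun snap :: "('p, 'r::linorder) ptree \<Rightarrow> 'p list list" where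
  "snap (Leaf p) = [flush_pifo p]"
| "snap (Internal qs p) = concat (map snap qs)"

text \<open>The paper's recursive definition
  flush(q) = eps if |q| = 0, and flush(q) = flush(q') . pkt if |q| > 0 and pop(q) = (pkt, q'),
  is rendered as the graph of this recursion: flush_tree q w holds iff unfolding the
  recursion finitely often from q terminates with the word w.  (flush_fuel n q unfolds
  at most n pop steps.)\<close>
fun flush_fuel :: "nat \<Rightarrow> ('p, 'r::linorder) ptree \<Rightarrow> 'p list option" where
  "flush_fuel n q =
     (if tsize q = 0 then Some []
      else (case n of 0 \<Rightarrow> None
            | Suc m \<Rightarrow> (case pop_tree q of None \<Rightarrow> None
                 | Some (pkt, q') \<Rightarrow> map_option (\<lambda>w. w @ [pkt]) (flush_fuel m q'))))"

definition flush_tree :: "('p, 'r::linorder) ptree \<Rightarrow> 'p list \<Rightarrow> bool" where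
  "flush_tree q w \<longleftrightarrow> (\<exists>n. flush_fuel n q = Some w)"

end

theory Submission
  imports Defs
begin

text \<open>Give every PIFO entry the same rank, so that every PIFO pops in insertion order.
  Let the i-th leaf hold only pkt_i, and let every node enqueue, in the desired departure
  order s = \<pi>(pkt_1) ... \<pi>(pkt_n), one entry per packet below it, naming the child that
  leads to that packet.  Popping the tree then follows the path to the first packet of s
  and leaves the tree built in the same way from the rest of s; hence the tree pops the
  packets in the order s, and each node holds exactly as many entries for a child as that
  child holds packets.\<close>

lemma set_take_Un_set_drop [simp]: "set (take n xs) \<union> set (drop n xs) = set xs"
  by (simp flip: set_append)

lemma in_set_take_or_drop:
  "x \<in> set xs \<Longrightarrow> x \<notin> set (take n xs) \<Longrightarrow> x \<in> set (drop n xs)"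
  using set_take_Un_set_drop[of n xs] by blast

lemma count_list_map_filter:
  "count_list (map f (filter P xs)) y = length (filter (\<lambda>x. P x \<and> f x = y) xs)"
  by (induction xs) auto

lemma length_filter_disj:
  "(\<And>x. P x \<Longrightarrow> \<not> Q x) \<Longrightarrow>
     length (filter (\<lambda>x. P x \<or> Q x) xs) = length (filter P xs) + length (filter Q xs)"
  by (induction xs) auto

lemma filter_eq_singleton_if_distinct:
  "distinct xs \<Longrightarrow> x \<in> set xs \<Longrightarrow> filter (\<lambda>y. y = x) xs = [x]"
  by (induction xs) (auto simp: filter_empty_conv)

definition fifo :: "'r \<Rightarrow> 's list \<Rightarrow> ('s, 'r) pifo" where
  "fifo c xs = map (\<lambda>x. (x, c)) xs"

lemma length_fifo [simp]: "length (fifo c xs) = length xs"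
  by (simp add: fifo_def)

lemma pop_pifo_Nil [simp]: "pop_pifo [] = None"
  by (simp add: pop_pifo_def)

lemma pop_pifo_fifo_Cons [simp]: "pop_pifo (fifo c (x # xs)) = Some (x, fifo c xs)"
proof -
  have "snd ` set (fifo c (x # xs)) = {c}"
    by (auto simp: fifo_def)
  then have min: "Min (snd ` set (fifo c (x # xs))) = c"
    by simp
  have least: "(LEAST k. k < length (fifo c (x # xs)) \<and> snd (fifo c (x # xs) ! k) = c) = 0"
    by (rule Least_equality) (auto simp: fifo_def)
  show ?thesis
    unfolding pop_pifo_def Let_def min least by (simp add: fifo_def)
qed

lemma flush_pifo_fifo: "flush_pifo (fifo c xs) = rev xs"
proof (induction xs)
  case Nil
  then show ?case by (subst flush_pifo.simps) (simp add: fifo_def)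
next
  case (Cons x xs)
  then show ?case by (subst flush_pifo.simps) simp
qed

lemma pifo_elems_fifo [simp]: "pifo_elems (fifo c xs) = set xs"
  by (force simp: pifo_elems_def fifo_def)

lemma pifo_count_fifo [simp]: "pifo_count (fifo c xs) x = count_list xs x"
  by (induction xs) (auto simp: pifo_count_def fifo_def)

fun child_index :: "topo list \<Rightarrow> 'p list \<Rightarrow> 'p \<Rightarrow> nat" where
  "child_index [] pk x = 0"
| "child_index (t # ts) pk x =
     (if x \<in> set (take (leaves t) pk) then 1 else Suc (child_index ts (drop (leaves t) pk) x))"

lemma child_index_bounds:
  "x \<in> set pk \<Longrightarrow> length pk = sum_list (map leaves ts) \<Longrightarrow>
     child_index ts pk x \<in> {1..length ts}"
proof (induction ts arbitrary: pk)
  case (Cons t ts)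
  then show ?case
    using in_set_take_or_drop[of x pk "leaves t"] by fastforce
qed simp

lemma filter_child_index_Cons:
  assumes "distinct pk" "length pk = leaves t + sum_list (map leaves ts)"
  shows "filter (\<lambda>x. x \<in> set pk \<and> child_index (t # ts) pk x = Suc 0) s
           = filter (\<lambda>x. x \<in> set (take (leaves t) pk)) s"
    and "filter (\<lambda>x. x \<in> set pk \<and> child_index (t # ts) pk x = Suc (Suc j)) s
           = filter (\<lambda>x. x \<in> set (drop (leaves t) pk) \<and>
                         child_index ts (drop (leaves t) pk) x = Suc j) s"
proof -
  have disj: "set (take (leaves t) pk) \<inter> set (drop (leaves t) pk) = {}"
    using set_take_disj_set_drop_if_distinct[OF assms(1) order_refl] .
  have not_in_take: "x \<notin> set (take (leaves t) pk) \<longleftrightarrow> x \<in> set (drop (leaves t) pk)"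
    if "x \<in> set pk" for x
    using disj in_set_take_or_drop[OF that] by blast
  have pos: "child_index ts (drop (leaves t) pk) x \<noteq> 0" if "x \<in> set (drop (leaves t) pk)" for x
    using child_index_bounds[OF that, of ts] assms(2) by auto
  show "filter (\<lambda>x. x \<in> set pk \<and> child_index (t # ts) pk x = Suc 0) s
      = filter (\<lambda>x. x \<in> set (take (leaves t) pk)) s"
    by (auto simp: not_in_take pos dest: in_set_takeD intro!: filter_cong) (use not_in_take pos in blast)
  show "filter (\<lambda>x. x \<in> set pk \<and> child_index (t # ts) pk x = Suc (Suc j)) s
      = filter (\<lambda>x. x \<in> set (drop (leaves t) pk) \<and>
                    child_index ts (drop (leaves t) pk) x = Suc j) s"
    using disj by (auto simp: not_in_take dest: in_set_dropD intro!: filter_cong)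
qed

text \<open>In \<open>fifo_tree c t pk s\<close> the list \<open>pk\<close> gives the packets of the leaves from left
  to right, and \<open>s\<close> is the order in which the tree is to release them.\<close>

fun fifo_tree :: "'r \<Rightarrow> topo \<Rightarrow> 'p list \<Rightarrow> 'p list \<Rightarrow> ('p, 'r) ptree"
and fifo_forest :: "'r \<Rightarrow> topo list \<Rightarrow> 'p list \<Rightarrow> 'p list \<Rightarrow> ('p, 'r) ptree list" where
  "fifo_tree c Star pk s = Leaf (fifo c (filter (\<lambda>x. x \<in> set pk) s))"
| "fifo_tree c (Node ts) pk s =
     Internal (fifo_forest c ts pk s)
       (fifo c (map (child_index ts pk) (filter (\<lambda>x. x \<in> set pk) s)))"
| "fifo_forest c [] pk s = []"
| "fifo_forest c (t # ts) pk s =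
     fifo_tree c t (take (leaves t) pk) s # fifo_forest c ts (drop (leaves t) pk) s"

lemma length_fifo_forest [simp]: "length (fifo_forest c ts pk s) = length ts"
  by (induction ts arbitrary: pk) auto

lemma has_topo_fifo_tree:
  "length pk = leaves t \<Longrightarrow> has_topo (fifo_tree c t pk s) t"
  "length pk = sum_list (map leaves ts) \<Longrightarrow> list_all2 has_topo (fifo_forest c ts pk s) ts"
proof (induction c t pk s and c ts pk s rule: fifo_tree_fifo_forest.induct)
  case (2 c ts pk s)
  then show ?case using child_index_bounds[of _ pk ts] by auto
qed auto

lemma fifo_tree_Cons_notin:
  "x \<notin> set pk \<Longrightarrow> fifo_tree c t pk (x # s) = fifo_tree c t pk s"
  "x \<notin> set pk \<Longrightarrow> fifo_forest c ts pk (x # s) = fifo_forest c ts pk s"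
  by (induction c t pk s and c ts pk s rule: fifo_tree_fifo_forest.induct)
     (auto dest: in_set_takeD in_set_dropD)

lemma tsize_fifo_tree:
  "distinct pk \<Longrightarrow> length pk = leaves t \<Longrightarrow>
     tsize (fifo_tree c t pk s) = length (filter (\<lambda>x. x \<in> set pk) s)"
  "distinct pk \<Longrightarrow> length pk = sum_list (map leaves ts) \<Longrightarrow>
     sum_list (map tsize (fifo_forest c ts pk s)) = length (filter (\<lambda>x. x \<in> set pk) s)"
proof (induction c t pk s and c ts pk s rule: fifo_tree_fifo_forest.induct)
  case (4 c t ts pk s)
  have "length (filter (\<lambda>x. x \<in> set pk) s) =
      length (filter (\<lambda>x. x \<in> set (take (leaves t) pk) \<or> x \<in> set (drop (leaves t) pk)) s)"
    by (metis set_take_Un_set_drop Un_iff)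
  also have "\<dots> = length (filter (\<lambda>x. x \<in> set (take (leaves t) pk)) s)
      + length (filter (\<lambda>x. x \<in> set (drop (leaves t) pk)) s)"
    using set_take_disj_set_drop_if_distinct[OF \<open>distinct pk\<close> order_refl]
    by (intro length_filter_disj) blast
  finally show ?case using 4 by simp
qed auto

lemma pop_tree_fifo_tree:
  "distinct pk \<Longrightarrow> length pk = leaves t \<Longrightarrow> x \<in> set pk \<Longrightarrow>
     pop_tree (fifo_tree c t pk (x # s)) = Some (x, fifo_tree c t pk s)"
  "distinct pk \<Longrightarrow> length pk = sum_list (map leaves ts) \<Longrightarrow> x \<in> set pk \<Longrightarrow>
     pop_tree (fifo_forest c ts pk (x # s) ! (child_index ts pk x - 1))
       = Some (x, fifo_forest c ts pk s ! (child_index ts pk x - 1)) \<and>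
     (fifo_forest c ts pk (x # s))
       [child_index ts pk x - 1 := fifo_forest c ts pk s ! (child_index ts pk x - 1)]
       = fifo_forest c ts pk s"
proof (induction c t pk s and c ts pk s rule: fifo_tree_fifo_forest.induct)
  case (2 c ts pk s)
  then show ?case using child_index_bounds[of x pk ts] by auto
next
  case (4 c t ts pk s)
  let ?pk1 = "take (leaves t) pk" and ?pk2 = "drop (leaves t) pk"
  have disj: "set ?pk1 \<inter> set ?pk2 = {}"
    using set_take_disj_set_drop_if_distinct[OF \<open>distinct pk\<close> order_refl] .
  show ?case
  proof (cases "x \<in> set ?pk1")
    case True
    then have "x \<notin> set ?pk2" using disj by blast
    with True 4 show ?thesis by (simp add: fifo_tree_Cons_notin)
  next
    case False
    then have "x \<in> set ?pk2" using in_set_take_or_drop \<open>x \<in> set pk\<close> by metis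
    moreover from this obtain j where "child_index ts ?pk2 x = Suc j"
      using child_index_bounds[of x ?pk2 ts] 4(4) by (cases "child_index ts ?pk2 x") auto
    ultimately show ?thesis using False 4 by (simp add: fifo_tree_Cons_notin)
  qed
qed simp_all

lemma flush_tree_fifo_tree:
  assumes "distinct pk" "length pk = leaves t" "set s \<subseteq> set pk"
  shows "flush_tree (fifo_tree c t pk s) (rev s)"
proof -
  have "flush_fuel (length s) (fifo_tree c t pk s) = Some (rev s)"
    using assms(3)
  proof (induction s)
    case Nil
    then show ?case using tsize_fifo_tree(1)[OF assms(1,2), of c "[]"] by simp
  next
    case (Cons x s)
    then have x: "x \<in> set pk" and "set s \<subseteq> set pk" by auto
    have "tsize (fifo_tree c t pk (x # s)) \<noteq> 0"
      using tsize_fifo_tree(1)[OF assms(1,2), of c "x # s"] x by simp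
    then have "flush_fuel (length (x # s)) (fifo_tree c t pk (x # s))
        = map_option (\<lambda>w. w @ [x]) (flush_fuel (length s) (fifo_tree c t pk s))"
      by (subst flush_fuel.simps)
        (simp add: pop_tree_fifo_tree(1)[OF assms(1,2) x] del: flush_fuel.simps)
    with Cons.IH \<open>set s \<subseteq> set pk\<close> show ?case by (simp del: flush_fuel.simps)
  qed
  then show ?thesis unfolding flush_tree_def by blast
qed

lemma snap_fifo_tree:
  "length pk = leaves t \<Longrightarrow> distinct s \<Longrightarrow> set pk \<subseteq> set s \<Longrightarrow>
     snap (fifo_tree c t pk s) = map (\<lambda>x. [x]) pk"
  "length pk = sum_list (map leaves ts) \<Longrightarrow> distinct s \<Longrightarrow> set pk \<subseteq> set s \<Longrightarrow>
     concat (map snap (fifo_forest c ts pk s)) = map (\<lambda>x. [x]) pk"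
proof (induction c t pk s and c ts pk s rule: fifo_tree_fifo_forest.induct)
  case (1 c pk s)
  then obtain p where "pk = [p]" by (cases pk) auto
  with 1 show ?case by (simp add: filter_eq_singleton_if_distinct flush_pifo_fifo)
next
  case (4 c t ts pk s)
  have "set (take (leaves t) pk) \<subseteq> set s" "set (drop (leaves t) pk) \<subseteq> set s"
    using \<open>set pk \<subseteq> set s\<close> set_take_subset set_drop_subset by fast+
  with 4 show ?case by (simp flip: map_append)
qed auto

lemma wf_tree_fifo_tree:
  "distinct pk \<Longrightarrow> length pk = leaves t \<Longrightarrow> wf_tree (fifo_tree c t pk s)"
  "distinct pk \<Longrightarrow> length pk = sum_list (map leaves ts) \<Longrightarrow>
     list_all wf_tree (fifo_forest c ts pk s) \<and>
     (\<forall>i < length ts. tsize (fifo_forest c ts pk s ! i) =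
        length (filter (\<lambda>x. x \<in> set pk \<and> child_index ts pk x = Suc i) s))"
proof (induction c t pk s and c ts pk s rule: fifo_tree_fifo_forest.induct)
  case (2 c ts pk s)
  then show ?case by (simp add: count_list_map_filter)
next
  case (4 c t ts pk s)
  let ?pk1 = "take (leaves t) pk" and ?pk2 = "drop (leaves t) pk"
  have pk1: "distinct ?pk1" "length ?pk1 = leaves t"
    and pk2: "distinct ?pk2" "length ?pk2 = sum_list (map leaves ts)"
    using 4(3,4) by auto
  have len: "length pk = leaves t + sum_list (map leaves ts)"
    using 4(4) by simp
  note IH2 = "4.IH"(2)[OF pk2]
  have head: "tsize (fifo_tree c t ?pk1 s)
      = length (filter (\<lambda>x. x \<in> set pk \<and> child_index (t # ts) pk x = Suc 0) s)"
    by (simp only: tsize_fifo_tree(1)[OF pk1] filter_child_index_Cons(1)[OF 4(3) len])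
  have tail: "tsize (fifo_forest c ts ?pk2 s ! j)
      = length (filter (\<lambda>x. x \<in> set pk \<and> child_index (t # ts) pk x = Suc (Suc j)) s)"
    if "j < length ts" for j
    using IH2 that by (simp only: filter_child_index_Cons(2)[OF 4(3) len])
  show ?case
  proof (intro conjI allI impI)
    show "list_all wf_tree (fifo_forest c (t # ts) pk s)"
      using "4.IH"(1)[OF pk1] IH2 by simp
  next
    fix i
    assume "i < length (t # ts)"
    then show "tsize (fifo_forest c (t # ts) pk s ! i)
        = length (filter (\<lambda>x. x \<in> set pk \<and> child_index (t # ts) pk x = Suc i) s)"
      using head tail by (cases i) (simp_all del: child_index.simps)
  qed
qed auto

theorem lemma4p8:
  fixes t :: topo and pkts :: "'p list" and \<pi> :: "'p \<Rightarrow> 'p"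
  assumes "distinct pkts" and "length pkts = leaves t"
    and "bij_betw \<pi> (set pkts) (set pkts)"
  shows "\<exists>q :: ('p, 'r::linorder) ptree.
           has_topo q t \<and> wf_tree q \<and>
           flush_tree q (rev (map \<pi> pkts)) \<and>
           snap q = map (\<lambda>x. [x]) pkts"
proof -
  let ?s = "map \<pi> pkts"
  let ?q = "fifo_tree (undefined :: 'r) t pkts ?s"
  have set_s: "set ?s = set pkts" and distinct_s: "distinct ?s"
    using assms(1,3) by (auto simp: bij_betw_def distinct_map)
  have "has_topo ?q t"
    by (rule has_topo_fifo_tree(1)[OF assms(2)])
  moreover have "wf_tree ?q"
    by (rule wf_tree_fifo_tree(1)[OF assms(1,2)])
  moreover have "flush_tree ?q (rev ?s)"
    by (rule flush_tree_fifo_tree[OF assms(1,2) equalityD1[OF set_s]])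
  moreover have "snap ?q = map (\<lambda>x. [x]) pkts"
    by (rule snap_fifo_tree(1)[OF assms(2) distinct_s equalityD2[OF set_s]])
  ultimately show ?thesis by blast
qed

end
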